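(* Let $X$ be a $k$-regular graph on $n$ vertices which may have loops (no multiple edges), where each loop contributes $1$ to the degree, and let $\tau$ be the least eigenvalue of its adjacency matrix $A$; assume $k>\tau$ (i.e. $A$ is not a scalar matrix). For any independent set $S$ of size $s$ containing $s_1$ vertices with loops, \[ s\le n\,\frac{-\tau+\sqrt{\tau^2+4s_1\frac{k-\tau}{n}}}{2(k-\tau)}. \]
   Context: The adjacency matrix has $A_{ii}=1$ if vertex $i$ carries a loop and $0$ otherwise, and $A_{ij}=1$ for adjacent distinct $i,j$. An independent set is a set of vertices no two distinct members of which are adjacent; looped vertices may belong to it. *)

theory Defs
  imports "Jordan_Normal_Form.Char_Poly"
begin

text \<open>Graph on vertex set {0..<n}, given by a symmetric adjacency relation E;
  E i i means vertex i carries a loop. Adjacency matrix: A_ij = 1 iff E i j.\<close>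

definition adj_mat :: "nat \<Rightarrow> (nat \<Rightarrow> nat \<Rightarrow> bool) \<Rightarrow> real mat" where
  "adj_mat n E = mat n n (\<lambda>(i, j). if E i j then 1 else 0)"

definition least_eigenvalue :: "real mat \<Rightarrow> real \<Rightarrow> bool" where
  "least_eigenvalue A \<tau> \<longleftrightarrow> eigenvalue A \<tau> \<and> (\<forall>\<mu>. eigenvalue A \<mu> \<longrightarrow> \<tau> \<le> \<mu>)"

end

theory Submission
  imports Defs "HOL-Analysis.Function_Topology"
begin

text \<open>The least eigenvalue \<open>\<tau>\<close> of the symmetric adjacency matrix bounds its quadratic
  form from below: \<open>\<tau> |x|\<^sup>2 \<le> x\<^sup>T A x\<close>. Apply this to \<open>x = 1\<^sub>S - (s/n) 1\<close>, which is
  orthogonal to the all-ones vector. Regularity and independence of \<open>S\<close> give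
  \<open>x\<^sup>T A x = s\<^sub>1 - k s\<^sup>2/n\<close> and \<open>|x|\<^sup>2 = s - s\<^sup>2/n\<close>, so \<open>s\<close> satisfies the quadratic inequality
  \<open>(k - \<tau>) s\<^sup>2/n + \<tau> s - s\<^sub>1 \<le> 0\<close>, and the bound is its larger root.\<close>

definition quad_form :: "nat \<Rightarrow> (nat \<Rightarrow> nat \<Rightarrow> real) \<Rightarrow> (nat \<Rightarrow> real) \<Rightarrow> real" where
  "quad_form n M x = (\<Sum>i<n. \<Sum>j<n. M i j * x i * x j)"

lemma quad_form_attains_min_on_sphere:
  assumes "n > 0"
  shows "\<exists>v. (\<Sum>i<n. v i ^ 2) = 1 \<and>
    (\<forall>x. (\<Sum>i<n. x i ^ 2) = 1 \<longrightarrow> quad_form n M v \<le> quad_form n M x)"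
proof -
  define I where "I = (\<lambda>i::nat. if i < n then {-1..1::real} else {0})"
  define K where "K = PiE UNIV I"
  define Sph where "Sph = K \<inter> {x. (\<Sum>i<n. x i ^ 2) = 1}"
  have "compactin (product_topology (\<lambda>i. euclideanreal) UNIV) K"
    unfolding K_def by (subst compactin_PiE) (auto simp: I_def)
  then have "compact K" by (simp add: euclidean_product_topology)
  moreover have "closed {x::nat\<Rightarrow>real. (\<Sum>i<n. x i ^ 2) = 1}"
    by (intro closed_Collect_eq continuous_intros continuous_on_product_then_coordinatewise
        continuous_on_id)
  ultimately have "compact Sph" unfolding Sph_def by (simp add: compact_Int_closed)
  have "(\<lambda>i. if i = 0 then 1 else 0) \<in> Sph"
    using assms by (auto simp: Sph_def K_def I_def PiE_def extensional_def
        if_distrib[where f="\<lambda>x. x^2"] cong: if_cong)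
  then have "Sph \<noteq> {}" by blast
  moreover have "continuous_on Sph (quad_form n M)" unfolding quad_form_def
    by (intro continuous_intros continuous_on_product_then_coordinatewise continuous_on_id)
  ultimately obtain v where v: "v \<in> Sph"
    and v_min: "\<And>y. y \<in> Sph \<Longrightarrow> quad_form n M v \<le> quad_form n M y"
    using continuous_attains_inf[OF \<open>compact Sph\<close>] by blast
  show ?thesis
  proof (intro exI conjI allI impI)
    show "(\<Sum>i<n. v i ^ 2) = 1" using v by (simp add: Sph_def)
    fix x :: "nat \<Rightarrow> real" assume x: "(\<Sum>i<n. x i ^ 2) = 1"
    define x' where "x' = (\<lambda>i. if i < n then x i else 0)"
    have "x i ^ 2 \<le> (\<Sum>i<n. x i ^ 2)" if "i < n" for i
      by (rule member_le_sum) (use that in auto)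
    then have "x i ^ 2 \<le> 1" if "i < n" for i using that x by simp
    then have "\<bar>x i\<bar> \<le> 1" if "i < n" for i using that abs_le_square_iff[of "x i" 1] by simp
    then have "x' \<in> Sph" using x by (auto simp: Sph_def K_def I_def x'_def abs_le_iff)
    moreover have "quad_form n M x' = quad_form n M x" by (simp add: quad_form_def x'_def)
    ultimately show "quad_form n M v \<le> quad_form n M x" using v_min by metis
  qed
qed

lemma quad_form_scale: "quad_form n M (\<lambda>i. c * x i) = c\<^sup>2 * quad_form n M x"
  unfolding quad_form_def by (simp add: sum_distrib_left power2_eq_square algebra_simps)

lemma quad_form_ge_min_on_sphere:
  assumes "\<forall>x. (\<Sum>i<n. x i ^ 2) = 1 \<longrightarrow> m \<le> quad_form n M x"
  shows "m * (\<Sum>i<n. x i ^ 2) \<le> quad_form n M x"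
proof (cases "(\<Sum>i<n. x i ^ 2) = 0")
  case True
  then have "\<forall>i<n. x i = 0" by (simp add: sum_nonneg_eq_0_iff)
  then have "quad_form n M x = 0" unfolding quad_form_def by simp
  then show ?thesis using True by simp
next
  case False
  define N where "N = (\<Sum>i<n. x i ^ 2)"
  have "N > 0" using False unfolding N_def by (simp add: less_le sum_nonneg)
  have "(\<Sum>i<n. (x i / sqrt N) ^ 2) = 1"
    using \<open>N > 0\<close> by (simp add: power_divide flip: sum_divide_distrib N_def)
  then have "m \<le> quad_form n M (\<lambda>i. (1 / sqrt N) * x i)" using assms by simp
  also have "\<dots> = (1 / sqrt N)\<^sup>2 * quad_form n M x" by (rule quad_form_scale)
  also have "\<dots> = quad_form n M x / N" using \<open>N > 0\<close> by (simp add: power_divide)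
  finally show ?thesis using \<open>N > 0\<close> by (simp add: N_def field_simps)
qed

lemma quad_form_add_scaled:
  assumes "\<forall>i<n. \<forall>j<n. M i j = M j i"
  shows "quad_form n M (\<lambda>i. v i + t * w i) =
    quad_form n M v + 2 * t * (\<Sum>i<n. w i * (\<Sum>j<n. M i j * v j)) + t\<^sup>2 * quad_form n M w"
proof -
  have swap: "(\<Sum>i<n. \<Sum>j<n. M i j * v i * w j) = (\<Sum>i<n. \<Sum>j<n. M i j * w i * v j)"
    using assms by (subst sum.swap) (auto intro!: sum.cong simp: mult_ac)
  have "quad_form n M (\<lambda>i. v i + t * w i) = quad_form n M v
      + t * (\<Sum>i<n. \<Sum>j<n. M i j * w i * v j)
      + t * (\<Sum>i<n. \<Sum>j<n. M i j * v i * w j)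
      + t\<^sup>2 * quad_form n M w"
    unfolding quad_form_def
    by (simp add: sum_distrib_left sum.distrib[symmetric] power2_eq_square algebra_simps)
  then show ?thesis
    unfolding swap by (simp add: sum_distrib_left algebra_simps)
qed

lemma linear_plus_quadratic_nonneg_imp_zero:
  fixes a c :: real
  assumes "\<forall>t. 0 \<le> 2 * t * a + t\<^sup>2 * c"
  shows "a = 0"
proof (rule ccontr)
  assume "a \<noteq> 0"
  define t where "t = - a / (\<bar>c\<bar> + 1)"
  have "t\<^sup>2 * c \<le> t\<^sup>2 * \<bar>c\<bar>" by (simp add: mult_left_mono)
  also have "\<dots> = (a\<^sup>2 / (\<bar>c\<bar> + 1)) * (\<bar>c\<bar> / (\<bar>c\<bar> + 1))"
    by (simp add: t_def power_divide power2_eq_square)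
  also have "\<dots> < a\<^sup>2 / (\<bar>c\<bar> + 1) * 1"
    using \<open>a \<noteq> 0\<close> by (intro mult_strict_left_mono) auto
  finally have "t\<^sup>2 * c < a\<^sup>2 / (\<bar>c\<bar> + 1)" by simp
  moreover have "2 * t * a = - 2 * (a\<^sup>2 / (\<bar>c\<bar> + 1))" by (simp add: t_def power2_eq_square)
  moreover have "a\<^sup>2 / (\<bar>c\<bar> + 1) > 0" using \<open>a \<noteq> 0\<close> by simp
  ultimately have "2 * t * a + t\<^sup>2 * c < 0" by linarith
  then show False using assms by (metis not_le)
qed

text \<open>A minimiser \<open>v\<close> of the quadratic form on the unit sphere is an eigenvector: otherwise
  moving \<open>v\<close> along the residual \<open>w = Mv - mv\<close> would decrease the Rayleigh quotient
  to first order.\<close>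

lemma rayleigh_min_eigenvector:
  assumes "n > 0" and sym: "\<forall>i<n. \<forall>j<n. M i j = M j i"
  shows "\<exists>v m. (\<Sum>i<n. v i ^ 2) = 1 \<and> (\<forall>i<n. (\<Sum>j<n. M i j * v j) = m * v i)
    \<and> (\<forall>x. m * (\<Sum>i<n. x i ^ 2) \<le> quad_form n M x)"
proof -
  obtain v where v_unit: "(\<Sum>i<n. v i ^ 2) = 1"
    and "\<forall>x. (\<Sum>i<n. x i ^ 2) = 1 \<longrightarrow> quad_form n M v \<le> quad_form n M x"
    using quad_form_attains_min_on_sphere[OF \<open>n > 0\<close>] by blast
  then have v_min: "quad_form n M v * (\<Sum>i<n. x i ^ 2) \<le> quad_form n M x" for x
    by (intro quad_form_ge_min_on_sphere) blast
  define m where "m = quad_form n M v"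
  define w where "w = (\<lambda>i. (\<Sum>j<n. M i j * v j) - m * v i)"
  define a where "a = (\<Sum>i<n. w i ^ 2)"
  define c where "c = quad_form n M w - m * a"
  have "0 \<le> 2 * t * a + t\<^sup>2 * c" for t
  proof -
    have "w i * (\<Sum>j<n. M i j * v j) = w i ^ 2 + m * (v i * w i)" for i
      by (simp add: w_def power2_eq_square algebra_simps)
    then have Mv: "(\<Sum>i<n. w i * (\<Sum>j<n. M i j * v j)) = a + m * (\<Sum>i<n. v i * w i)"
      by (simp add: a_def sum.distrib sum_distrib_left)
    have norm: "(\<Sum>i<n. (v i + t * w i) ^ 2) = 1 + 2 * t * (\<Sum>i<n. v i * w i) + t\<^sup>2 * a"
      using v_unit by (simp add: a_def power2_eq_square sum.distrib sum_distrib_left algebra_simps)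
    show ?thesis
      using v_min[of "\<lambda>i. v i + t * w i"]
      unfolding quad_form_add_scaled[OF sym] Mv norm m_def[symmetric] c_def
      by (simp add: algebra_simps)
  qed
  then have "a = 0" by (intro linear_plus_quadratic_nonneg_imp_zero) blast
  then have "\<forall>i<n. (\<Sum>j<n. M i j * v j) = m * v i"
    by (simp add: a_def w_def sum_nonneg_eq_0_iff)
  then show ?thesis using v_unit v_min m_def by blast
qed

lemma least_eigenvalue_le_quad_form:
  assumes sym: "\<forall>i<n. \<forall>j<n. M i j = M j i"
    and least: "least_eigenvalue (mat n n (\<lambda>(i, j). M i j)) \<tau>"
  shows "\<tau> * (\<Sum>i<n. x i ^ 2) \<le> quad_form n M x"
proof (cases "n = 0")
  case True
  then show ?thesis by (simp add: quad_form_def)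
next
  case False
  then obtain v m where v_unit: "(\<Sum>i<n. v i ^ 2) = 1"
    and v_eigen: "\<forall>i<n. (\<Sum>j<n. M i j * v j) = m * v i"
    and m_min: "\<forall>x. m * (\<Sum>i<n. x i ^ 2) \<le> quad_form n M x"
    using rayleigh_min_eigenvector[OF _ sym] by blast
  have "vec n v \<noteq> 0\<^sub>v n"
  proof
    assume "vec n v = 0\<^sub>v n"
    then have "\<forall>i<n. v i = 0" by (metis index_vec index_zero_vec(1))
    then show False using v_unit by simp
  qed
  moreover have "mat n n (\<lambda>(i, j). M i j) *\<^sub>v vec n v = m \<cdot>\<^sub>v vec n v"
    using v_eigen by (intro eq_vecI) (simp_all add: scalar_prod_def lessThan_atLeast0)
  ultimately have "eigenvalue (mat n n (\<lambda>(i, j). M i j)) m"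
    unfolding eigenvalue_def eigenvector_def by (intro exI[of _ "vec n v"]) simp
  then have "\<tau> \<le> m" using least unfolding least_eigenvalue_def by blast
  then have "\<tau> * (\<Sum>i<n. x i ^ 2) \<le> m * (\<Sum>i<n. x i ^ 2)"
    by (intro mult_right_mono) (auto intro: sum_nonneg)
  then show ?thesis using m_min by (meson order_trans)
qed

lemma quad_form_shift_const:
  assumes sym: "\<forall>i<n. \<forall>j<n. M i j = M j i" and rows: "\<forall>i<n. (\<Sum>j<n. M i j) = k"
  shows "quad_form n M (\<lambda>i. f i - c) =
    quad_form n M f - 2 * c * k * (\<Sum>i<n. f i) + c\<^sup>2 * k * n"
proof -
  have "(\<Sum>j<n. M i j * f i) = k * f i" if "i < n" for i
    using rows that by (simp flip: sum_distrib_right)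
  then have row: "(\<Sum>i<n. \<Sum>j<n. M i j * f i) = k * (\<Sum>i<n. f i)"
    by (simp add: sum_distrib_left)
  have "(\<Sum>i<n. \<Sum>j<n. M i j * f j) = (\<Sum>i<n. \<Sum>j<n. M i j * f i)"
    using sym by (subst sum.swap) (auto intro!: sum.cong)
  with row have col: "(\<Sum>i<n. \<Sum>j<n. M i j * f j) = k * (\<Sum>i<n. f i)" by simp
  have "quad_form n M (\<lambda>i. f i - c) = quad_form n M f - c * (\<Sum>i<n. \<Sum>j<n. M i j * f i)
      - c * (\<Sum>i<n. \<Sum>j<n. M i j * f j) + c\<^sup>2 * (\<Sum>i<n. \<Sum>j<n. M i j)"
    unfolding quad_form_def
    by (simp add: sum_subtractf sum.distrib sum_distrib_left power2_eq_square algebra_simps)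
  then show ?thesis using rows by (simp add: row col)
qed

lemma quad_form_indicator:
  assumes "S \<subseteq> {..<n}" and "\<forall>i\<in>S. \<forall>j\<in>S. i \<noteq> j \<longrightarrow> M i j = 0"
  shows "quad_form n M (indicator S) = (\<Sum>i\<in>S. M i i)"
proof -
  have "finite S" using assms(1) finite_subset by blast
  have "quad_form n M (indicator S) = (\<Sum>i\<in>S. \<Sum>j\<in>S. M i j)"
    using assms(1) by (simp add: quad_form_def Int_absorb1 flip: sum_distrib_right)
  also have "\<dots> = (\<Sum>i\<in>S. M i i)"
    using assms(2) \<open>finite S\<close> by (intro sum.cong refl) (simp add: sum.remove[of S])
  finally show ?thesis .
qed

lemma quadratic_le_0_imp_le_root:
  fixes a b c s :: real
  assumes "a > 0" and "a * s\<^sup>2 + b * s - c \<le> 0"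
  shows "s \<le> (- b + sqrt (b\<^sup>2 + 4 * a * c)) / (2 * a)"
proof -
  have "(2 * a * s + b)\<^sup>2 \<le> b\<^sup>2 + 4 * a * c"
    using assms mult_left_mono[OF assms(2), of "4 * a"]
    by (simp add: power2_eq_square algebra_simps)
  then have "2 * a * s + b \<le> sqrt (b\<^sup>2 + 4 * a * c)"
    using real_sqrt_le_mono by fastforce
  then show ?thesis using assms(1) by (simp add: field_simps)
qed

lemma independent_set_bound_regular_matrix:
  fixes M :: "nat \<Rightarrow> nat \<Rightarrow> real" and k \<tau> :: real
  assumes sym: "\<forall>i<n. \<forall>j<n. M i j = M j i"
    and rows: "\<forall>i<n. (\<Sum>j<n. M i j) = k"
    and least: "least_eigenvalue (mat n n (\<lambda>(i, j). M i j)) \<tau>"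
    and "\<tau> < k"
    and S_sub: "S \<subseteq> {..<n}"
    and indep: "\<forall>i\<in>S. \<forall>j\<in>S. i \<noteq> j \<longrightarrow> M i j = 0"
  shows "real (card S) \<le> real n *
    (- \<tau> + sqrt (\<tau>\<^sup>2 + 4 * (\<Sum>i\<in>S. M i i) * ((k - \<tau>) / real n))) / (2 * (k - \<tau>))"
proof (cases "n = 0")
  case True
  then show ?thesis using S_sub by simp
next
  case False
  define s where "s = real (card S)"
  define c where "c = s / n"
  define x where "x = (\<lambda>i. indicator S i - c)"
  have sum_ind: "(\<Sum>i<n. indicator S i) = s"
    using S_sub by (simp add: s_def indicator_def Int_absorb1)
  have "(\<Sum>i<n. x i ^ 2) = (\<Sum>i<n. (1 - 2 * c) * indicator S i + c\<^sup>2)"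
    by (intro sum.cong) (auto simp: x_def indicator_def power2_eq_square algebra_simps)
  also have "\<dots> = s - s\<^sup>2 / n"
    using False by (simp add: sum.distrib flip: sum_distrib_left)
      (simp add: sum_ind c_def power2_eq_square field_simps)
  finally have norm: "(\<Sum>i<n. x i ^ 2) = s - s\<^sup>2 / n" .
  have "quad_form n M x = (\<Sum>i\<in>S. M i i) - k * s\<^sup>2 / n"
    using False
    unfolding x_def quad_form_shift_const[OF sym rows] quad_form_indicator[OF S_sub indep]
    by (simp add: sum_ind c_def power2_eq_square field_simps)
  then have "((k - \<tau>) / n) * s\<^sup>2 + \<tau> * s - (\<Sum>i\<in>S. M i i) \<le> 0"
    using least_eigenvalue_le_quad_form[OF sym least, of x] unfolding norm
    by (simp add: algebra_simps diff_divide_distrib)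
  then have "s \<le> (- \<tau> + sqrt (\<tau>\<^sup>2 + 4 * ((k - \<tau>) / n) * (\<Sum>i\<in>S. M i i))) / (2 * ((k - \<tau>) / n))"
    using \<open>\<tau> < k\<close> False by (intro quadratic_le_0_imp_le_root) auto
  also have "\<dots> = n * (- \<tau> + sqrt (\<tau>\<^sup>2 + 4 * (\<Sum>i\<in>S. M i i) * ((k - \<tau>) / n))) / (2 * (k - \<tau>))"
    using False by (simp add: ac_simps)
  finally show ?thesis unfolding s_def .
qed

theorem corollary3p3:
  fixes n k :: nat and E :: "nat \<Rightarrow> nat \<Rightarrow> bool" and S :: "nat set" and \<tau> :: real
  assumes sym: "\<forall>i<n. \<forall>j<n. E i j = E j i"
    and regular: "\<forall>i<n. card {j. j < n \<and> E i j} = k"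
    and least: "least_eigenvalue (adj_mat n E) \<tau>"
    and k_gt: "real k > \<tau>"
    and S_sub: "S \<subseteq> {..<n}"
    and indep: "\<forall>i\<in>S. \<forall>j\<in>S. i \<noteq> j \<longrightarrow> \<not> E i j"
  shows "real (card S) \<le> real n *
    (- \<tau> + sqrt (\<tau>\<^sup>2 + 4 * real (card {i\<in>S. E i i}) * ((real k - \<tau>) / real n)))
    / (2 * (real k - \<tau>))"
proof -
  define M where "M = (\<lambda>i j. if E i j then 1 else 0 :: real)"
  have "finite S" using S_sub finite_subset by blast
  have M_sym: "\<forall>i<n. \<forall>j<n. M i j = M j i" using sym by (simp add: M_def)
  have rows: "\<forall>i<n. (\<Sum>j<n. M i j) = real k"
    using regular by (simp add: M_def sum.If_cases Int_def)
  have "least_eigenvalue (mat n n (\<lambda>(i, j). M i j)) \<tau>"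
    using least by (simp add: adj_mat_def M_def)
  moreover have "\<forall>i\<in>S. \<forall>j\<in>S. i \<noteq> j \<longrightarrow> M i j = 0" using indep by (simp add: M_def)
  moreover have "(\<Sum>i\<in>S. M i i) = real (card {i\<in>S. E i i})"
    using \<open>finite S\<close> by (simp add: M_def sum.If_cases Int_def)
  ultimately show ?thesis
    using independent_set_bound_regular_matrix[OF M_sym rows _ k_gt S_sub] by simp
qed

end
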